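(* A function $f:(0,\infty)\to(0,\infty)$ is stable, i.e. satisfies $|f(x)-f(y)|\le\sqrt{\frac{f(x)f(y)}{xy}}\,|x-y|$ for all $x,y>0$, if and only if $x\mapsto f(x)/x$ is non-increasing and $x\mapsto xf(x)$ is non-decreasing. *)

theory Defs
  imports Complex_Main
begin

definition stable :: "(real \<Rightarrow> real) \<Rightarrow> bool" where
  "stable f \<longleftrightarrow> (\<forall>x>0. \<forall>y>0. \<bar>f x - f y\<bar> \<le> sqrt (f x * f y / (x * y)) * \<bar>x - y\<bar>)"

end

theory Submission
  imports Defs
begin

text \<open>Squaring the stability inequality and clearing denominators turns it into
  \<open>(a y - b x)(a x - b y) \<le> 0\<close> for \<open>a = f x\<close>, \<open>b = f y\<close>. For \<open>x \<le> y\<close> the first factor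
  exceeds the second by \<open>(a + b)(y - x) \<ge> 0\<close>, so the product is non-positive exactly when
  \<open>a y \<ge> b x\<close> and \<open>a x \<le> b y\<close>, i.e. when \<open>f(t)/t\<close> decreases and \<open>t f(t)\<close> increases
  from \<open>x\<close> to \<open>y\<close>.\<close>

lemma abs_diff_le_sqrt_iff:
  fixes a b x y :: real
  assumes "a > 0" "b > 0" "x > 0" "y > 0"
  shows "\<bar>a - b\<bar> \<le> sqrt (a * b / (x * y)) * \<bar>x - y\<bar> \<longleftrightarrow> (a * y - b * x) * (a * x - b * y) \<le> 0"
proof -
  have "sqrt (a * b / (x * y)) * \<bar>x - y\<bar> = sqrt (a * b / (x * y) * (x - y)\<^sup>2)"
    by (simp only: real_sqrt_mult real_sqrt_abs)
  then have "\<bar>a - b\<bar> \<le> sqrt (a * b / (x * y)) * \<bar>x - y\<bar> \<longleftrightarrow> (a - b)\<^sup>2 \<le> a * b / (x * y) * (x - y)\<^sup>2"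
    by (metis abs_ge_zero real_le_rsqrt real_sqrt_abs real_sqrt_le_iff)
  also have "\<dots> \<longleftrightarrow> (a - b)\<^sup>2 * (x * y) \<le> a * b * (x - y)\<^sup>2"
    using assms by (simp add: field_simps)
  also have "\<dots> \<longleftrightarrow> (a * y - b * x) * (a * x - b * y) \<le> 0"
    by (simp add: algebra_simps power2_eq_square)
  finally show ?thesis .
qed

lemma cross_product_nonpos_iff:
  fixes a b x y :: real
  assumes "a \<ge> 0" "b \<ge> 0" "x \<le> y"
  shows "(a * y - b * x) * (a * x - b * y) \<le> 0 \<longleftrightarrow> b * x \<le> a * y \<and> a * x \<le> b * y"
proof -
  have "(a * y - b * x) - (a * x - b * y) = (a + b) * (y - x)"
    by (simp add: algebra_simps)
  moreover have "(a + b) * (y - x) \<ge> 0"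
    using assms by simp
  ultimately have "a * x - b * y \<le> a * y - b * x"
    by linarith
  then show ?thesis
    by (smt (verit) mult_neg_neg mult_pos_pos mult_nonneg_nonpos)
qed

lemma stable_iff_le:
  "stable f \<longleftrightarrow>
     (\<forall>x>0. \<forall>y>0. x \<le> y \<longrightarrow> \<bar>f x - f y\<bar> \<le> sqrt (f x * f y / (x * y)) * \<bar>x - y\<bar>)"
  unfolding stable_def
  by (metis (no_types, opaque_lifting) abs_minus_commute linorder_le_cases mult.commute)

theorem mainTheorem7:
  fixes f :: "real \<Rightarrow> real"
  assumes pos: "\<And>x. x > 0 \<Longrightarrow> f x > 0"
  shows "stable f \<longleftrightarrow>
           ((\<forall>x>0. \<forall>y>0. x \<le> y \<longrightarrow> f y / y \<le> f x / x) \<and>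
            (\<forall>x>0. \<forall>y>0. x \<le> y \<longrightarrow> x * f x \<le> y * f y))"
proof -
  have pair: "\<bar>f x - f y\<bar> \<le> sqrt (f x * f y / (x * y)) * \<bar>x - y\<bar> \<longleftrightarrow>
      f y / y \<le> f x / x \<and> x * f x \<le> y * f y" if "x > 0" "x \<le> y" for x y
  proof -
    have "y > 0" "f x > 0" "f y > 0"
      using that pos by auto
    then have "\<bar>f x - f y\<bar> \<le> sqrt (f x * f y / (x * y)) * \<bar>x - y\<bar> \<longleftrightarrow>
        f y * x \<le> f x * y \<and> f x * x \<le> f y * y"
      using abs_diff_le_sqrt_iff[of "f x" "f y" x y] cross_product_nonpos_iff[of "f x" "f y" x y]
        that by simp
    also have "\<dots> \<longleftrightarrow> f y / y \<le> f x / x \<and> x * f x \<le> y * f y"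
      using \<open>x > 0\<close> \<open>y > 0\<close> by (simp add: divide_simps mult.commute)
    finally show ?thesis .
  qed
  have "stable f \<longleftrightarrow> (\<forall>x>0. \<forall>y>0. x \<le> y \<longrightarrow> f y / y \<le> f x / x \<and> x * f x \<le> y * f y)"
    unfolding stable_iff_le using pair by blast
  then show ?thesis
    by blast
qed

end
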